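(* Let $\mu$ be a subadditive capacity on $(\Omega,\mathcal{F})$ which is continuous from above, and let $\{X_n\}_{n\in\mathbb{N}}$, $X$, $Y$, $Z$ be real-valued random variables with $Y\le X_n\le Z$ for all $n$ and with $\int_\Omega Y\, d\mu$ and $\int_\Omega Z\, d\mu$ finite. If $\bar{\mu}(\{\omega:\ \lim_{n\to\infty}X_n(\omega)= X(\omega)\})=1$, then $\lim_{n\to\infty}\int_\Omega X_n\, d\mu=\int_\Omega X\, d\mu$.
   Context: A capacity is $\mu:\mathcal{F}\to[0,1]$ with $\mu(\emptyset)=0$, $\mu(\Omega)=1$, monotone; subadditive if $\mu(A\cup B)\le\mu(A)+\mu(B)$ for disjoint $A,B$; continuous from above if $\mu(A_n)\to\mu(A)$ whenever $A_n\downarrow A$. The conjugate is $\bar{\mu}(A)=1-\mu(A^c)$. Choquet integral: $\int_{\Omega}\xi\, d\mu=\int_{0}^{\infty}\mu(\{\xi\ge t\})\,dt+\int_{-\infty}^0[\mu(\{\xi\ge t\})-1]\,dt$. *)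

theory Defs
  imports "HOL-Analysis.Analysis"
begin

definition capacity :: "'a measure \<Rightarrow> ('a set \<Rightarrow> real) \<Rightarrow> bool" where
  "capacity M \<mu> \<longleftrightarrow>
     (\<forall>A\<in>sets M. 0 \<le> \<mu> A \<and> \<mu> A \<le> 1) \<and>
     \<mu> {} = 0 \<and> \<mu> (space M) = 1 \<and>
     (\<forall>A\<in>sets M. \<forall>B\<in>sets M. A \<subseteq> B \<longrightarrow> \<mu> A \<le> \<mu> B)"

definition subadditive_cap :: "'a measure \<Rightarrow> ('a set \<Rightarrow> real) \<Rightarrow> bool" where
  "subadditive_cap M \<mu> \<longleftrightarrow>
     (\<forall>A\<in>sets M. \<forall>B\<in>sets M. A \<inter> B = {} \<longrightarrow> \<mu> (A \<union> B) \<le> \<mu> A + \<mu> B)"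

definition cont_from_above :: "'a measure \<Rightarrow> ('a set \<Rightarrow> real) \<Rightarrow> bool" where
  "cont_from_above M \<mu> \<longleftrightarrow>
     (\<forall>A :: nat \<Rightarrow> 'a set. (\<forall>n. A n \<in> sets M) \<longrightarrow> decseq A \<longrightarrow>
        (\<lambda>n. \<mu> (A n)) \<longlonglongrightarrow> \<mu> (\<Inter>n. A n))"

definition conj_cap :: "'a measure \<Rightarrow> ('a set \<Rightarrow> real) \<Rightarrow> 'a set \<Rightarrow> real" where
  "conj_cap M \<mu> A = 1 - \<mu> (space M - A)"

text \<open>The two improper integrals of the monotone functions
  t |-> mu {xi >= t} are taken as Lebesgue integrals over [0,oo) and (-oo,0];
  the Choquet integral is finite iff both are integrable.\<close>
definition choquet_integrable :: "'a measure \<Rightarrow> ('a set \<Rightarrow> real) \<Rightarrow> ('a \<Rightarrow> real) \<Rightarrow> bool" where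
  "choquet_integrable M \<mu> \<xi> \<longleftrightarrow>
     set_integrable lborel {0..} (\<lambda>t. \<mu> {\<omega>\<in>space M. \<xi> \<omega> \<ge> t}) \<and>
     set_integrable lborel {..0} (\<lambda>t. \<mu> {\<omega>\<in>space M. \<xi> \<omega> \<ge> t} - 1)"

definition choquet :: "'a measure \<Rightarrow> ('a set \<Rightarrow> real) \<Rightarrow> ('a \<Rightarrow> real) \<Rightarrow> real" where
  "choquet M \<mu> \<xi> =
     (LINT t:{0..}|lborel. \<mu> {\<omega>\<in>space M. \<xi> \<omega> \<ge> t}) +
     (LINT t:{..0}|lborel. \<mu> {\<omega>\<in>space M. \<xi> \<omega> \<ge> t} - 1)"

end

theory Submission
  imports Defs
begin

text \<open>Write \<open>G\<^sub>\<xi>(t) = \<mu>{\<xi> \<ge> t}\<close>, so that the Choquet integral is a Lebesgue integral of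
  \<open>G\<^sub>\<xi>\<close> over the two half-lines. Subadditivity makes \<mu>-null sets negligible, and continuity
  from above applied to the sets \<open>{\<exists>k\<ge>n. X\<^sub>k \<ge> t}\<close> and to the differences
  \<open>{X \<ge> t} - {\<forall>k\<ge>n. X\<^sub>k \<ge> s}\<close> (\<open>s < t\<close>) gives \<open>limsup G\<^sub>X\<^sub>n(t) \<le> G\<^sub>X(t)\<close> and
  \<open>liminf G\<^sub>X\<^sub>n(s) \<ge> G\<^sub>X(t)\<close>. Hence \<open>G\<^sub>X\<^sub>n \<rightarrow> G\<^sub>X\<close> at every continuity point of the
  monotone function \<open>G\<^sub>X\<close>, i.e. Lebesgue-almost everywhere, and since
  \<open>G\<^sub>Y \<le> G\<^sub>X\<^sub>n \<le> G\<^sub>Z\<close>, dominated convergence on both half-lines concludes.\<close>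

definition tail_cap :: "'a measure \<Rightarrow> ('a set \<Rightarrow> real) \<Rightarrow> ('a \<Rightarrow> real) \<Rightarrow> real \<Rightarrow> real" where
  "tail_cap M \<mu> \<xi> t = \<mu> {\<omega>\<in>space M. t \<le> \<xi> \<omega>}"

lemma choquet_integrable_tail_cap:
  "choquet_integrable M \<mu> \<xi> \<longleftrightarrow>
     set_integrable lborel {0..} (tail_cap M \<mu> \<xi>) \<and>
     set_integrable lborel {..0} (\<lambda>t. tail_cap M \<mu> \<xi> t - 1)"
  by (simp add: choquet_integrable_def tail_cap_def[abs_def])

lemma choquet_tail_cap:
  "choquet M \<mu> \<xi> =
     (LINT t:{0..}|lborel. tail_cap M \<mu> \<xi> t) + (LINT t:{..0}|lborel. tail_cap M \<mu> \<xi> t - 1)"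
  by (simp add: choquet_def tail_cap_def)

lemma capacity_mono:
  "capacity M \<mu> \<Longrightarrow> A \<in> sets M \<Longrightarrow> B \<in> sets M \<Longrightarrow> A \<subseteq> B \<Longrightarrow> \<mu> A \<le> \<mu> B"
  unfolding capacity_def by blast

lemma capacity_nonneg: "capacity M \<mu> \<Longrightarrow> A \<in> sets M \<Longrightarrow> 0 \<le> \<mu> A"
  unfolding capacity_def by blast

lemma capacity_le_one: "capacity M \<mu> \<Longrightarrow> A \<in> sets M \<Longrightarrow> \<mu> A \<le> 1"
  unfolding capacity_def by blast

lemma subadditive_capD:
  "subadditive_cap M \<mu> \<Longrightarrow> A \<in> sets M \<Longrightarrow> B \<in> sets M \<Longrightarrow> A \<inter> B = {} \<Longrightarrow>
     \<mu> (A \<union> B) \<le> \<mu> A + \<mu> B"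
  unfolding subadditive_cap_def by blast

lemma cont_from_aboveD:
  "cont_from_above M \<mu> \<Longrightarrow> (\<And>n. A n \<in> sets M) \<Longrightarrow> decseq A \<Longrightarrow>
     (\<lambda>n. \<mu> (A n)) \<longlonglongrightarrow> \<mu> (\<Inter>n. A n)"
  unfolding cont_from_above_def by blast

lemma capacity_Diff_null:
  assumes cap: "capacity M \<mu>" and sub: "subadditive_cap M \<mu>"
    and A: "A \<in> sets M" and N: "N \<in> sets M" "\<mu> N = 0"
  shows "\<mu> (A - N) = \<mu> A"
proof -
  have "\<mu> A = \<mu> ((A - N) \<union> (A \<inter> N))"
    by (simp add: Un_Diff_Int)
  also have "\<dots> \<le> \<mu> (A - N) + \<mu> (A \<inter> N)"
    using sub A N by (intro subadditive_capD) auto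
  also have "\<mu> (A \<inter> N) \<le> \<mu> N"
    using cap A N by (intro capacity_mono) auto
  finally have "\<mu> A \<le> \<mu> (A - N)"
    using N by simp
  moreover have "\<mu> (A - N) \<le> \<mu> A"
    using cap A N by (intro capacity_mono) auto
  ultimately show ?thesis
    by linarith
qed

lemma tail_cap_nonneg:
  "capacity M \<mu> \<Longrightarrow> \<xi> \<in> borel_measurable M \<Longrightarrow> 0 \<le> tail_cap M \<mu> \<xi> t"
  unfolding tail_cap_def by (rule capacity_nonneg) measurable

lemma tail_cap_le_one:
  "capacity M \<mu> \<Longrightarrow> \<xi> \<in> borel_measurable M \<Longrightarrow> tail_cap M \<mu> \<xi> t \<le> 1"
  unfolding tail_cap_def by (rule capacity_le_one) measurable

lemma tail_cap_mono:
  assumes "capacity M \<mu>" "\<xi> \<in> borel_measurable M" "\<eta> \<in> borel_measurable M"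
    and "\<And>\<omega>. \<omega> \<in> space M \<Longrightarrow> \<xi> \<omega> \<le> \<eta> \<omega>"
  shows "tail_cap M \<mu> \<xi> t \<le> tail_cap M \<mu> \<eta> t"
  unfolding tail_cap_def using assms by (intro capacity_mono) (auto intro: order_trans)

lemma mono_uminus_tail_cap:
  "capacity M \<mu> \<Longrightarrow> \<xi> \<in> borel_measurable M \<Longrightarrow> mono (\<lambda>t. - tail_cap M \<mu> \<xi> t)"
  unfolding mono_def tail_cap_def by (auto intro!: capacity_mono)

lemma borel_measurable_tail_cap:
  assumes "capacity M \<mu>" "\<xi> \<in> borel_measurable M"
  shows "tail_cap M \<mu> \<xi> \<in> borel_measurable borel"
proof -
  have "(\<lambda>t. - (- tail_cap M \<mu> \<xi> t)) \<in> borel_measurable borel"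
    using borel_measurable_mono[OF mono_uminus_tail_cap[OF assms]] by measurable
  then show ?thesis
    by simp
qed

lemma countable_discontinuities_tail_cap:
  assumes "capacity M \<mu>" "\<xi> \<in> borel_measurable M"
  shows "countable {t. \<not> isCont (tail_cap M \<mu> \<xi>) t}"
proof -
  have "isCont (\<lambda>t. - tail_cap M \<mu> \<xi> t) t \<longleftrightarrow> isCont (tail_cap M \<mu> \<xi>) t" for t
    using isCont_minus[of t "\<lambda>t. - tail_cap M \<mu> \<xi> t"] by auto
  then show ?thesis
    using mono_ctble_discont[OF mono_uminus_tail_cap[OF assms]] by simp
qed

context
  fixes M :: "'a measure" and \<mu> :: "'a set \<Rightarrow> real"
    and X :: "nat \<Rightarrow> 'a \<Rightarrow> real" and X0 :: "'a \<Rightarrow> real" and N :: "'a set"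
  assumes cap: "capacity M \<mu>" and sub: "subadditive_cap M \<mu>" and cfa: "cont_from_above M \<mu>"
    and X[measurable]: "\<And>n. X n \<in> borel_measurable M" and X0[measurable]: "X0 \<in> borel_measurable M"
    and N[measurable]: "N \<in> sets M" and null: "\<mu> N = 0"
    and conv: "\<And>\<omega>. \<omega> \<in> space M - N \<Longrightarrow> (\<lambda>n. X n \<omega>) \<longlonglongrightarrow> X0 \<omega>"
begin

lemma eventually_tail_cap_less:
  assumes "tail_cap M \<mu> X0 t < a"
  shows "\<forall>\<^sub>F n in sequentially. tail_cap M \<mu> (X n) t < a"
proof -
  define B where "B n = {\<omega>\<in>space M. \<exists>k\<ge>n. t \<le> X k \<omega>}" for n
  have B[measurable]: "B n \<in> sets M" for n
    unfolding B_def by measurable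
  have "(\<Inter>n. B n) - N \<subseteq> {\<omega>\<in>space M. t \<le> X0 \<omega>}"
  proof safe
    fix \<omega> assume \<omega>: "\<omega> \<in> (\<Inter>n. B n)" "\<omega> \<notin> N"
    then show "\<omega> \<in> space M"
      by (auto simp: B_def)
    show "t \<le> X0 \<omega>"
    proof (rule ccontr)
      assume "\<not> t \<le> X0 \<omega>"
      moreover have "(\<lambda>k. X k \<omega>) \<longlonglongrightarrow> X0 \<omega>"
        using conv \<omega> by (auto simp: B_def)
      ultimately have "\<forall>\<^sub>F k in sequentially. X k \<omega> < t"
        by (intro order_tendstoD(2)) auto
      then obtain n where "\<forall>k\<ge>n. X k \<omega> < t"
        by (auto simp: eventually_sequentially)
      with \<omega> show False
        by (force simp: B_def)
    qed
  qed
  then have "\<mu> ((\<Inter>n. B n) - N) \<le> tail_cap M \<mu> X0 t"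
    unfolding tail_cap_def using cap by (intro capacity_mono) auto
  then have "\<mu> (\<Inter>n. B n) < a"
    using assms capacity_Diff_null[OF cap sub _ N null, of "\<Inter>n. B n"] by simp
  moreover have "(\<lambda>n. \<mu> (B n)) \<longlonglongrightarrow> \<mu> (\<Inter>n. B n)"
    using cfa by (rule cont_from_aboveD) (auto simp: decseq_def B_def intro: order_trans)
  ultimately have "\<forall>\<^sub>F n in sequentially. \<mu> (B n) < a"
    by (rule order_tendstoD(2)[rotated])
  moreover have "tail_cap M \<mu> (X n) t \<le> \<mu> (B n)" for n
    unfolding tail_cap_def using cap by (intro capacity_mono) (auto simp: B_def)
  ultimately show ?thesis
    by (elim eventually_mono) (rule le_less_trans)
qed

lemma eventually_less_tail_cap:
  assumes a: "a < tail_cap M \<mu> X0 t" and "s < t"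
  shows "\<forall>\<^sub>F n in sequentially. a < tail_cap M \<mu> (X n) s"
proof -
  define A where "A = {\<omega>\<in>space M. t \<le> X0 \<omega>} - N"
  define E where "E n = {\<omega>\<in>space M. \<forall>k\<ge>n. s \<le> X k \<omega>}" for n
  have A[measurable]: "A \<in> sets M" and E[measurable]: "E n \<in> sets M" for n
    unfolding A_def E_def by measurable
  have "(\<lambda>n. \<mu> (A - E n)) \<longlonglongrightarrow> \<mu> (\<Inter>n. A - E n)"
    using cfa by (rule cont_from_aboveD) (auto simp: decseq_def E_def)
  moreover have empty: "(\<Inter>n. A - E n) = {}"
  proof safe
    fix \<omega> assume \<omega>: "\<omega> \<in> (\<Inter>n. A - E n)"
    then have "(\<lambda>k. X k \<omega>) \<longlonglongrightarrow> X0 \<omega>" "s < X0 \<omega>"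
      using conv \<open>s < t\<close> by (auto simp: A_def)
    then have "\<forall>\<^sub>F k in sequentially. s < X k \<omega>"
      by (rule order_tendstoD(1))
    then obtain n where "\<forall>k\<ge>n. s < X k \<omega>"
      by (auto simp: eventually_sequentially)
    with \<omega> show "\<omega> \<in> {}"
      by (force simp: A_def E_def)
  qed
  ultimately have "(\<lambda>n. \<mu> (A - E n)) \<longlonglongrightarrow> 0"
    using cap by (simp only: empty capacity_def)
  moreover have "0 < \<mu> A - a"
    using a capacity_Diff_null[OF cap sub _ N null] by (simp add: A_def tail_cap_def)
  ultimately have "\<forall>\<^sub>F n in sequentially. \<mu> (A - E n) < \<mu> A - a"
    by (rule order_tendstoD(2))
  then show ?thesis
  proof (rule eventually_mono)
    fix n assume small: "\<mu> (A - E n) < \<mu> A - a"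
    have "\<mu> A \<le> \<mu> (E n \<union> (A - E n))"
      using cap by (intro capacity_mono) (auto simp: A_def)
    also have "\<dots> \<le> \<mu> (E n) + \<mu> (A - E n)"
      using sub by (intro subadditive_capD) auto
    also have "\<mu> (E n) \<le> tail_cap M \<mu> (X n) s"
      unfolding tail_cap_def using cap by (intro capacity_mono) (auto simp: E_def)
    finally show "a < tail_cap M \<mu> (X n) s"
      using small by linarith
  qed
qed

lemma tendsto_tail_cap:
  assumes cont: "isCont (tail_cap M \<mu> X0) s"
  shows "(\<lambda>n. tail_cap M \<mu> (X n) s) \<longlonglongrightarrow> tail_cap M \<mu> X0 s"
proof (rule order_tendstoI)
  fix a assume "tail_cap M \<mu> X0 s < a"
  then show "\<forall>\<^sub>F n in sequentially. tail_cap M \<mu> (X n) s < a"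
    by (rule eventually_tail_cap_less)
next
  fix a assume a: "a < tail_cap M \<mu> X0 s"
  have "(tail_cap M \<mu> X0 \<longlongrightarrow> tail_cap M \<mu> X0 s) (at_right s)"
    using cont by (simp add: isCont_def filterlim_at_split)
  then have "\<forall>\<^sub>F t in at_right s. s < t \<and> a < tail_cap M \<mu> X0 t"
    using eventually_conj[OF eventually_at_right_less order_tendstoD(1)] a by blast
  then obtain t where "s < t" "a < tail_cap M \<mu> X0 t"
    using eventually_happens'[OF trivial_limit_at_right_real] by blast
  then show "\<forall>\<^sub>F n in sequentially. a < tail_cap M \<mu> (X n) s"
    by (intro eventually_less_tail_cap)
qed

lemma AE_tendsto_tail_cap:
  "AE t in lborel. (\<lambda>n. tail_cap M \<mu> (X n) t) \<longlonglongrightarrow> tail_cap M \<mu> X0 t"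
proof (rule AE_I')
  show "{t. \<not> isCont (tail_cap M \<mu> X0) t} \<in> null_sets lborel"
    using countable_discontinuities_tail_cap[OF cap X0] by (rule countable_imp_null_set_lborel)
qed (auto intro: tendsto_tail_cap)

end

lemma set_integral_dominated_convergence:
  fixes f :: "'a \<Rightarrow> real"
  assumes [measurable]: "A \<in> sets M" "f \<in> borel_measurable M" "\<And>i. s i \<in> borel_measurable M"
    and w: "set_integrable M A w"
    and lim: "AE x in M. (\<lambda>i. s i x) \<longlonglongrightarrow> f x"
    and bound: "\<And>i x. x \<in> A \<Longrightarrow> \<bar>s i x\<bar> \<le> w x"
  shows "set_integrable M A f" and "(\<lambda>i. LINT x:A|M. s i x) \<longlonglongrightarrow> (LINT x:A|M. f x)"
proof -
  have f: "(\<lambda>x. indicator A x * f x) \<in> borel_measurable M"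
    and s: "(\<lambda>x. indicator A x * s i x) \<in> borel_measurable M" for i
    by measurable
  have w': "integrable M (\<lambda>x. indicator A x * w x)"
    using w by (simp add: set_integrable_def)
  have lim': "AE x in M. (\<lambda>i. indicator A x * s i x) \<longlonglongrightarrow> indicator A x * f x"
    using lim by eventually_elim (rule tendsto_mult_left)
  have bound': "AE x in M. norm (indicator A x * s i x) \<le> indicator A x * w x" for i
    using bound by (simp add: indicator_def)
  show "set_integrable M A f"
    using integrable_dominated_convergence[OF f s w' lim' bound'] by (simp add: set_integrable_def)
  show "(\<lambda>i. LINT x:A|M. s i x) \<longlonglongrightarrow> (LINT x:A|M. f x)"
    using integral_dominated_convergence[OF f s w' lim' bound'] by (simp add: set_lebesgue_integral_def)
qed

theorem lemma3:
  fixes M :: "'a measure" and \<mu> :: "'a set \<Rightarrow> real"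
    and X :: "nat \<Rightarrow> 'a \<Rightarrow> real" and X0 Y Z :: "'a \<Rightarrow> real"
  assumes "capacity M \<mu>" and "subadditive_cap M \<mu>" and "cont_from_above M \<mu>"
    and "\<And>n. X n \<in> borel_measurable M"
    and "X0 \<in> borel_measurable M" and "Y \<in> borel_measurable M" and "Z \<in> borel_measurable M"
    and "\<And>n \<omega>. \<omega> \<in> space M \<Longrightarrow> Y \<omega> \<le> X n \<omega> \<and> X n \<omega> \<le> Z \<omega>"
    and "choquet_integrable M \<mu> Y" and "choquet_integrable M \<mu> Z"
    and "conj_cap M \<mu> {\<omega>\<in>space M. (\<lambda>n. X n \<omega>) \<longlonglongrightarrow> X0 \<omega>} = 1"
  shows "choquet_integrable M \<mu> X0 \<and>
         (\<lambda>n. choquet M \<mu> (X n)) \<longlonglongrightarrow> choquet M \<mu> X0"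
proof -
  note cap = assms(1) and [measurable] = assms(4-7)
  note [measurable] = borel_measurable_tail_cap[OF cap]
  define N where "N = space M - {\<omega>\<in>space M. (\<lambda>n. X n \<omega>) \<longlonglongrightarrow> X0 \<omega>}"
  have "N \<in> sets M"
    unfolding N_def by measurable
  moreover have "\<mu> N = 0"
    using assms(11) by (simp add: N_def conj_cap_def)
  ultimately have lim: "AE t in lborel. (\<lambda>n. tail_cap M \<mu> (X n) t) \<longlonglongrightarrow> tail_cap M \<mu> X0 t"
    using assms(1-5) by (intro AE_tendsto_tail_cap) (auto simp: N_def)
  then have lim1: "AE t in lborel. (\<lambda>n. tail_cap M \<mu> (X n) t - 1) \<longlonglongrightarrow> tail_cap M \<mu> X0 t - 1"
    by eventually_elim (intro tendsto_diff tendsto_const)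
  have "\<bar>tail_cap M \<mu> (X n) t\<bar> \<le> \<bar>tail_cap M \<mu> Z t\<bar>"
    and "\<bar>tail_cap M \<mu> (X n) t - 1\<bar> \<le> \<bar>tail_cap M \<mu> Y t - 1\<bar>" for n t
    using tail_cap_mono[OF cap, of Y "X n" t] tail_cap_mono[OF cap, of "X n" Z t] assms(8)
      tail_cap_nonneg[OF cap, of "X n" t] tail_cap_le_one[OF cap, of "X n" t] by auto
  from set_integral_dominated_convergence[OF _ _ _ set_integrable_abs lim this(1)]
    and set_integral_dominated_convergence[OF _ _ _ set_integrable_abs lim1 this(2)]
  show ?thesis
    using assms(9,10) unfolding choquet_integrable_tail_cap choquet_tail_cap
    by (auto intro: tendsto_add)
qed

end
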